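(* Let $F_2,F_4$ be real numbers with $F_4\ge F_2^2$, and let $p=\frac{3}{\sqrt{21}}$. Then \[(1-p)\,\frac{3+3F_2}{4}+p\,\frac{15-6F_2-F_4}{16}\;\le\;\frac{3(\sqrt{21}-4)}{2}\;<\;0.8739.\] (Interpretation: if the average performance on $3$-clauses is $\frac{3+3F_2}{4}$, the average performance on $5$-clauses is $\frac{15-6F_2-F_4}{16}$, and $F_4\ge F_2^2$, then on the distribution choosing a random $3$-clause with probability $1-\frac{3}{\sqrt{21}}$ and a random $5$-clause with probability $\frac{3}{\sqrt{21}}$, the average performance is at most $\frac{3(\sqrt{21}-4)}{2}$.) *)

theory Defs
  imports Complex_Main
begin

end

theory Submission
  imports Defs
begin

text \<open>The mixed performance decreases in \<open>F4\<close>, so the worst case is \<open>F4 = F2\<^sup>2\<close>. There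
  it is a concave quadratic in \<open>F2\<close>; completing the square shows that its maximum, attained
  at \<open>F2 = 2 sqrt 21 - 9\<close>, is exactly \<open>3 (sqrt 21 - 4) / 2\<close>.\<close>

definition mixed_performance :: "real \<Rightarrow> real \<Rightarrow> real \<Rightarrow> real" where
  "mixed_performance p F2 F4 = (1 - p) * ((3 + 3 * F2) / 4) + p * ((15 - 6 * F2 - F4) / 16)"

lemma mixed_performance_antimono:
  assumes "0 \<le> p" and "F4 \<le> F4'"
  shows "mixed_performance p F2 F4' \<le> mixed_performance p F2 F4"
  using assms by (simp add: mixed_performance_def mult_left_mono)

lemma mixed_performance_square_eq:
  "mixed_performance (3 / sqrt 21) x (x\<^sup>2)
     = 3 * (sqrt 21 - 4) / 2 - 3 / (16 * sqrt 21) * (x - (2 * sqrt 21 - 9))\<^sup>2"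
proof -
  define s where "s = sqrt 21"
  have "s\<^sup>2 = 21" and "s > 0"
    by (simp_all add: s_def)
  then have "mixed_performance (3 / s) x (x\<^sup>2)
      = 3 * (s - 4) / 2 - 3 / (16 * s) * (x - (2 * s - 9))\<^sup>2"
    by (simp add: mixed_performance_def field_simps power2_eq_square)
  then show ?thesis
    by (simp add: s_def)
qed

lemma mixed_performance_square_le:
  "mixed_performance (3 / sqrt 21) x (x\<^sup>2) \<le> 3 * (sqrt 21 - 4) / 2"
proof -
  have "0 \<le> 3 / (16 * sqrt 21) * (x - (2 * sqrt 21 - 9))\<^sup>2"
    by simp
  then show ?thesis
    unfolding mixed_performance_square_eq by linarith
qed

lemma sqrt_21_less: "sqrt 21 < (4.5826::real)"
proof -
  have "sqrt 21 < sqrt (4.5826\<^sup>2 :: real)"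
    by (simp add: power2_eq_square)
  then show ?thesis
    by simp
qed

theorem mainTheorem6:
  fixes F2 F4 p :: real
  assumes "F4 \<ge> F2\<^sup>2"
    and "p = 3 / sqrt 21"
  shows "(1 - p) * ((3 + 3 * F2) / 4) + p * ((15 - 6 * F2 - F4) / 16) \<le> 3 * (sqrt 21 - 4) / 2
         \<and> 3 * (sqrt 21 - 4) / 2 < (0.8739::real)"
proof
  have "mixed_performance p F2 F4 \<le> mixed_performance p F2 (F2\<^sup>2)"
    using assms by (intro mixed_performance_antimono) simp_all
  also have "\<dots> \<le> 3 * (sqrt 21 - 4) / 2"
    using assms(2) mixed_performance_square_le by simp
  finally show "(1 - p) * ((3 + 3 * F2) / 4) + p * ((15 - 6 * F2 - F4) / 16)
      \<le> 3 * (sqrt 21 - 4) / 2"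
    by (simp add: mixed_performance_def)
  show "3 * (sqrt 21 - 4) / 2 < (0.8739::real)"
    using sqrt_21_less by simp
qed

end
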